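(* Let $(\lambda,\vartheta,\zeta_0)$ be fluid model data as in the context. If $\lambda\mathbf E[B1_{\{D=\infty\}}]<1$ and $\mathbf E[\min\{B,D\}]<\infty$, then every fluid model solution $z(\cdot)$ is bounded on $[0,\infty)$.
   Context: $\overline{\mathbb R}_+=[0,\infty]$. Fluid model data: $\lambda>0$; $\vartheta$ a Borel probability measure on $\overline{\mathbb R}_+^2$ with $\vartheta(\{0\}\times\overline{\mathbb R}_+)=\vartheta(\overline{\mathbb R}_+\times\{0\})=\vartheta(\{(\infty,\infty)\})=0$, $(B,D)$ a random pair with law $\vartheta$, $\rho=\lambda\mathbf E[B]>1$; $\zeta_0$ a finite nonnegative Borel measure on $\overline{\mathbb R}_+^2$ with marginals free of atoms in $[0,\infty)$ and total mass $z_0$; if $z_0>0$, $(B^0,D^0)$ has law $\zeta_0/z_0$. A fluid model solution is a continuous function $z:[0,\infty)\to[0,\infty)$ with $\inf_{t>a}z(t)>0$ for all $a>0$ satisfying $z(t)=z_0\mathbf P(B^0>S(0,t);D^0>t)+\lambda\int_0^t\mathbf P(B>S(s,t);D>t-s)ds$ for $t\ge0$, where $S(u,v)=\int_u^vz(s)^{-1}ds$ (the first term is $0$ if $z_0=0$); equivalently $z$ is the total mass of a measure valued fluid model solution. *)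

theory Defs
  imports "HOL-Probability.Probability"
begin

definition fluid_data ::
  "real \<Rightarrow> (ennreal \<times> ennreal) measure \<Rightarrow> (ennreal \<times> ennreal) measure \<Rightarrow> bool" where
  "fluid_data lam \<theta> \<zeta>0 \<longleftrightarrow>
     lam > 0 \<and>
     prob_space \<theta> \<and> sets \<theta> = sets borel \<and>
     emeasure \<theta> ({0} \<times> UNIV) = 0 \<and>
     emeasure \<theta> (UNIV \<times> {0}) = 0 \<and>
     emeasure \<theta> {(\<top>, \<top>)} = 0 \<and>
     ennreal lam * (\<integral>\<^sup>+ x. fst x \<partial>\<theta>) > 1 \<and>
     finite_measure \<zeta>0 \<and> sets \<zeta>0 = sets borel \<and>
     (\<forall>x. x \<noteq> \<top> \<longrightarrow> emeasure \<zeta>0 ({x} \<times> UNIV) = 0 \<and> emeasure \<zeta>0 (UNIV \<times> {x}) = 0)"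

definition Sfun :: "(real \<Rightarrow> real) \<Rightarrow> real \<Rightarrow> real \<Rightarrow> ennreal" where
  "Sfun z u v = (\<integral>\<^sup>+ s. ennreal (1 / z s) * indicator {u..v} s \<partial>lborel)"

text \<open>Fluid model solution. The first term z0 P(B0 > S(0,t); D0 > t) is written
  as the \<zeta>0-measure of the corresponding event (this is 0 when z0 = 0).\<close>
definition fluid_solution ::
  "real \<Rightarrow> (ennreal \<times> ennreal) measure \<Rightarrow> (ennreal \<times> ennreal) measure \<Rightarrow> (real \<Rightarrow> real) \<Rightarrow> bool" where
  "fluid_solution lam \<theta> \<zeta>0 z \<longleftrightarrow>
     continuous_on {0..} z \<and>
     (\<forall>t\<ge>0. z t \<ge> 0) \<and>
     (\<forall>a>0. (INF t\<in>{a<..}. z t) > 0) \<and>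
     (\<forall>t\<ge>0. z t =
        measure \<zeta>0 {p. fst p > Sfun z 0 t \<and> snd p > ennreal t}
        + lam * (LINT s:{0..t}|lborel.
             measure \<theta> {p. fst p > Sfun z s t \<and> snd p > ennreal (t - s)}))"

end

theory Submission
  imports Defs
begin

(* Let M >= 1 bound z on [0,t]. Then S(s,t) >= (t - s)/M, so mass that arrived at time s and is
   still present at time t satisfies min(M B, D) > t - s; integrating over arrival times
   (a layer-cake bound) gives
     z(t) <= z0 + lam E[min(M B, D)] <= z0 + lam K + M lam E[min(B,D); D > K].
   As K -> oo, E[min(B,D); D > K] decreases to E[B; D = oo] because E[min(B,D)] < oo, so for
   large K the right-hand side is affine in M with slope r < 1. Applied with M the maximum of z
   on [0,t], attained at some t', this yields M <= (z0 + lam K)/(1 - r) uniformly in t. *)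

lemma nn_integral_emeasure_tail_le:
  fixes X :: "'a \<Rightarrow> ennreal"
  assumes "sigma_finite_measure M" and X[measurable]: "X \<in> borel_measurable M"
  shows "(\<integral>\<^sup>+s\<in>{0..t}. emeasure M {x \<in> space M. ennreal (t - s) < X x} \<partial>lborel) \<le> (\<integral>\<^sup>+x. X x \<partial>M)"
proof -
  interpret pair_sigma_finite lborel M
    using assms(1) by (simp add: pair_sigma_finite_def lborel.sigma_finite_measure_axioms)
  have "(\<integral>\<^sup>+s\<in>{0..t}. emeasure M {x \<in> space M. ennreal (t - s) < X x} \<partial>lborel)
      = (\<integral>\<^sup>+s. (\<integral>\<^sup>+x. indicator {0..t} s * indicator {x \<in> space M. ennreal (t - s) < X x} x \<partial>M) \<partial>lborel)"
    by (intro nn_integral_cong, subst nn_integral_cmult_indicator) (auto simp: mult.commute)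
  also have "\<dots> = (\<integral>\<^sup>+x. (\<integral>\<^sup>+s. indicator {0..t} s * indicator {x \<in> space M. ennreal (t - s) < X x} x \<partial>lborel) \<partial>M)"
    by (rule Fubini'[symmetric]) measurable
  also have "\<dots> \<le> (\<integral>\<^sup>+x. X x \<partial>M)"
  proof (rule nn_integral_mono)
    fix x
    show "(\<integral>\<^sup>+s. indicator {0..t} s * indicator {x \<in> space M. ennreal (t - s) < X x} x \<partial>lborel) \<le> X x"
    proof (cases "X x")
      case (real r)
      have "(\<integral>\<^sup>+s. indicator {0..t} s * indicator {x \<in> space M. ennreal (t - s) < X x} x \<partial>lborel)
          \<le> (\<integral>\<^sup>+s. indicator {t - r..t} s \<partial>lborel)"
        using real by (intro nn_integral_mono) (auto split: split_indicator simp: ennreal_less_iff)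
      then show ?thesis
        using real by simp
    qed simp
  qed
  finally show ?thesis .
qed

lemma ennreal_set_integral_le_set_nn_integral:
  fixes g :: "real \<Rightarrow> real"
  assumes "\<And>s. s \<in> A \<Longrightarrow> 0 \<le> g s"
  shows "ennreal (LINT s:A|lborel. g s) \<le> (\<integral>\<^sup>+s\<in>A. ennreal (g s) \<partial>lborel)"
proof (cases "integrable lborel (\<lambda>s. indicator A s *\<^sub>R g s)")
  case True
  have "(\<integral>\<^sup>+s\<in>A. ennreal (g s) \<partial>lborel) = (\<integral>\<^sup>+ s. ennreal (indicator A s *\<^sub>R g s) \<partial>lborel)"
    by (intro nn_integral_cong) (simp split: split_indicator)
  also have "\<dots> = ennreal (LINT s:A|lborel. g s)"
    unfolding set_lebesgue_integral_def
    by (rule nn_integral_eq_integral[OF True]) (simp add: assms split: split_indicator)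
  finally show ?thesis by simp
qed (simp add: set_lebesgue_integral_def not_integrable_integral_eq)

lemma tendsto_set_nn_integral_decseq:
  assumes [measurable]: "f \<in> borel_measurable M" and fin: "integral\<^sup>N M f \<noteq> \<infinity>"
    and A: "range A \<subseteq> sets M" "decseq A"
  shows "(\<lambda>n. \<integral>\<^sup>+x\<in>A n. f x \<partial>M) \<longlonglongrightarrow> (\<integral>\<^sup>+x\<in>(\<Inter>n. A n). f x \<partial>M)"
proof -
  have "(\<lambda>n. emeasure (density M f) (A n)) \<longlonglongrightarrow> emeasure (density M f) (\<Inter>n. A n)"
  proof (rule Lim_emeasure_decseq)
    fix n
    have "emeasure (density M f) (A n) \<le> integral\<^sup>N M f"
      using A by (auto simp: emeasure_density intro!: nn_integral_mono split: split_indicator)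
    then show "emeasure (density M f) (A n) \<noteq> \<infinity>"
      using fin by (auto simp: top_unique)
  qed (use A in auto)
  moreover have "(\<Inter>n. A n) \<in> sets M"
    using A by auto
  ultimately show ?thesis
    using A by (simp add: emeasure_density range_subsetD)
qed

lemma
  fixes M :: "('a::second_countable_topology \<times> 'b::second_countable_topology) measure"
  assumes "sets M = sets borel"
  shows fst_measurable_sets_borel: "fst \<in> borel_measurable M"
    and snd_measurable_sets_borel: "snd \<in> borel_measurable M"
    and space_sets_borel: "space M = UNIV"
proof -
  have "sets M = sets (borel \<Otimes>\<^sub>M borel)"
    by (metis assms borel_prod)
  then show "fst \<in> borel_measurable M" "snd \<in> borel_measurable M"
    by (simp_all add: measurable_cong_sets[of M "borel \<Otimes>\<^sub>M borel" borel borel])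
  show "space M = UNIV"
    using sets_eq_imp_space_eq[OF assms] by simp
qed

lemma tendsto_nn_integral_min_tail:
  fixes B D :: "'a \<Rightarrow> ennreal"
  assumes [measurable]: "B \<in> borel_measurable M" "D \<in> borel_measurable M"
    and fin: "(\<integral>\<^sup>+x. min (B x) (D x) \<partial>M) \<noteq> \<infinity>"
  shows "(\<lambda>n. \<integral>\<^sup>+x\<in>{x \<in> space M. of_nat n < D x}. min (B x) (D x) \<partial>M)
           \<longlonglongrightarrow> (\<integral>\<^sup>+x\<in>{x \<in> space M. D x = \<infinity>}. B x \<partial>M)"
proof -
  define A where "A n = {x \<in> space M. of_nat n < D x}" for n :: nat
  have "A n \<in> sets M" for n
    unfolding A_def by measurable
  moreover have "decseq A"
    unfolding A_def decseq_def by (auto intro: le_less_trans[OF of_nat_mono])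
  ultimately have "(\<lambda>n. \<integral>\<^sup>+x\<in>A n. min (B x) (D x) \<partial>M)
      \<longlonglongrightarrow> (\<integral>\<^sup>+x\<in>(\<Inter>n. A n). min (B x) (D x) \<partial>M)"
    using fin by (intro tendsto_set_nn_integral_decseq) auto
  also have "(\<Inter>n. A n) = {x \<in> space M. D x = \<infinity>}"
    unfolding A_def
    by (auto simp: of_nat_less_top) (metis ennreal_Ex_less_of_nat less_asym top.not_eq_extremum)
  also have "(\<integral>\<^sup>+x\<in>{x \<in> space M. D x = \<infinity>}. min (B x) (D x) \<partial>M)
      = (\<integral>\<^sup>+x\<in>{x \<in> space M. D x = \<infinity>}. B x \<partial>M)"
    by (intro nn_integral_cong) (simp split: split_indicator)
  finally show ?thesis
    unfolding A_def .
qed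

lemma nn_integral_min_mult_le:
  fixes B D :: "'a \<Rightarrow> ennreal" and c K :: ennreal
  assumes "prob_space M" and [measurable]: "B \<in> borel_measurable M" "D \<in> borel_measurable M"
    and "1 \<le> c"
  shows "(\<integral>\<^sup>+x. min (B x * c) (D x) \<partial>M)
           \<le> K + c * (\<integral>\<^sup>+x\<in>{x \<in> space M. K < D x}. min (B x) (D x) \<partial>M)"
proof -
  interpret prob_space M by fact
  have "min (b * c) d \<le> K + c * (min b d * indicator {K<..} d)" for b d :: ennreal
  proof (cases "K < d")
    case True
    have "min (b * c) d \<le> c * min b d"
    proof (cases "b \<le> d")
      case False
      have "d \<le> c * d"
        using \<open>1 \<le> c\<close> mult_right_mono[of 1 c d] by simp
      then show ?thesis
        using False by (simp add: min.coboundedI2)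
    qed (simp add: min.coboundedI1 mult.commute)
    then show ?thesis
      using True by (simp add: add_increasing)
  next
    case False
    then show ?thesis
      by (simp add: min.coboundedI2 not_less)
  qed
  then have "(\<integral>\<^sup>+x. min (B x * c) (D x) \<partial>M)
      \<le> (\<integral>\<^sup>+x. K + c * (min (B x) (D x) * indicator {x \<in> space M. K < D x} x) \<partial>M)"
    by (intro nn_integral_mono) (simp add: indicator_def)
  also have "\<dots> = K + c * (\<integral>\<^sup>+x\<in>{x \<in> space M. K < D x}. min (B x) (D x) \<partial>M)"
    by (simp add: nn_integral_add nn_integral_cmult emeasure_space_1)
  finally show ?thesis .
qed

lemma bounded_if_le_affine_running_max:
  fixes z :: "real \<Rightarrow> real"
  assumes cont: "continuous_on {0..} z" and "r < 1"
    and le: "\<And>t M. 0 \<le> t \<Longrightarrow> 1 \<le> M \<Longrightarrow> (\<forall>s\<in>{0..t}. z s \<le> M) \<Longrightarrow> z t \<le> a + r * M"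
  shows "\<exists>B. \<forall>t\<ge>0. z t \<le> B"
proof (intro exI allI impI)
  fix t :: real
  assume "0 \<le> t"
  moreover have "continuous_on {0..t} z"
    using cont by (rule continuous_on_subset) auto
  ultimately obtain t' where t': "t' \<in> {0..t}" and max: "\<forall>s\<in>{0..t}. z s \<le> z t'"
    using continuous_attains_sup[of "{0..t}" z] by auto
  have "z t' \<le> max 1 (a / (1 - r))"
  proof (cases "z t' \<le> 1")
    case False
    then have "z t' \<le> a + r * z t'"
      using t' max by (intro le) auto
    then have "z t' * (1 - r) \<le> a"
      by (simp add: algebra_simps)
    then have "z t' \<le> a / (1 - r)"
      using \<open>r < 1\<close> by (simp add: pos_le_divide_eq)
    then show ?thesis
      by simp
  qed simp
  moreover have "z t \<le> z t'"
    using max \<open>0 \<le> t\<close> by simp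
  ultimately show "z t \<le> max 1 (a / (1 - r))"
    by linarith
qed

lemma fluid_solution_pos:
  assumes "fluid_solution lam \<theta> \<zeta>0 z" and "0 < t"
  shows "0 < z t"
proof -
  have nonneg: "\<forall>t\<ge>0. 0 \<le> z t" and inf: "\<forall>a>0. 0 < (INF t\<in>{a<..}. z t)"
    using assms(1) unfolding fluid_solution_def by auto
  have "bdd_below (z ` {t/2<..})"
    using nonneg \<open>0 < t\<close> by (intro bdd_belowI2[of _ 0]) auto
  then have "(INF s\<in>{t/2<..}. z s) \<le> z t"
    using \<open>0 < t\<close> by (intro cINF_lower) auto
  moreover have "0 < (INF s\<in>{t/2<..}. z s)"
    using inf \<open>0 < t\<close> by simp
  ultimately show ?thesis
    by simp
qed

lemma Sfun_ge_divide:
  assumes "s \<le> t" and "0 < M" and z: "\<And>r. r \<in> {s<..t} \<Longrightarrow> 0 < z r \<and> z r \<le> M"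
  shows "ennreal ((t - s) / M) \<le> Sfun z s t"
proof -
  have "(\<integral>\<^sup>+r\<in>{s..t}. ennreal (1 / M) \<partial>lborel) = ennreal (1 / M) * ennreal (t - s)"
    using assms(1) by (simp add: nn_integral_cmult_indicator)
  then have "ennreal ((t - s) / M) = (\<integral>\<^sup>+r\<in>{s..t}. ennreal (1 / M) \<partial>lborel)"
    using assms(1,2) by (simp add: ennreal_mult[symmetric])
  also have "\<dots> \<le> (\<integral>\<^sup>+r\<in>{s..t}. ennreal (1 / z r) \<partial>lborel)"
    \<comment> \<open>z may vanish at the endpoint s, a null set\<close>
    using AE_lborel_singleton[of s]
  proof (intro nn_integral_mono_AE, eventually_elim)
    case (elim r)
    then show ?case
      using z[of r] by (auto simp: frac_le ennreal_leI split: split_indicator)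
  qed
  finally show ?thesis
    unfolding Sfun_def .
qed

lemma fluid_arrival_integral_le:
  fixes \<theta> :: "(ennreal \<times> ennreal) measure"
  assumes "prob_space \<theta>" and S: "sets \<theta> = sets borel" and "0 < M"
    and z: "\<And>r. r \<in> {0<..t} \<Longrightarrow> 0 < z r \<and> z r \<le> M"
  shows "ennreal (LINT s:{0..t}|lborel. measure \<theta> {p. Sfun z s t < fst p \<and> ennreal (t - s) < snd p})
           \<le> (\<integral>\<^sup>+p. min (fst p * ennreal M) (snd p) \<partial>\<theta>)"
proof -
  interpret prob_space \<theta> by fact
  note [measurable] = fst_measurable_sets_borel[OF S] snd_measurable_sets_borel[OF S]
  note space = space_sets_borel[OF S]
  define X where "X p = min (fst p * ennreal M) (snd p)" for p
  have emeasure_bound: "emeasure \<theta> {p. Sfun z s t < fst p \<and> ennreal (t - s) < snd p}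
      \<le> emeasure \<theta> {p \<in> space \<theta>. ennreal (t - s) < X p}" if s: "s \<in> {0..t}" for s
  proof (rule emeasure_mono)
    have "ennreal ((t - s) / M) \<le> Sfun z s t"
      using s z by (intro Sfun_ge_divide \<open>0 < M\<close>) auto
    then have "ennreal (t - s) < fst p * ennreal M" if "Sfun z s t < fst p" for p :: "ennreal \<times> ennreal"
      using that \<open>0 < M\<close> s ennreal_mult_strict_right_mono[of "ennreal ((t - s) / M)" "fst p" "ennreal M"]
      by (auto simp: ennreal_mult[symmetric])
    then show "{p. Sfun z s t < fst p \<and> ennreal (t - s) < snd p} \<subseteq> {p \<in> space \<theta>. ennreal (t - s) < X p}"
      by (auto simp: X_def space)
    show "{p \<in> space \<theta>. ennreal (t - s) < X p} \<in> sets \<theta>"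
      unfolding X_def by measurable
  qed
  have "ennreal (LINT s:{0..t}|lborel. measure \<theta> {p. Sfun z s t < fst p \<and> ennreal (t - s) < snd p})
      \<le> (\<integral>\<^sup>+s\<in>{0..t}. ennreal (measure \<theta> {p. Sfun z s t < fst p \<and> ennreal (t - s) < snd p}) \<partial>lborel)"
    by (rule ennreal_set_integral_le_set_nn_integral) simp
  also have "\<dots> \<le> (\<integral>\<^sup>+s\<in>{0..t}. emeasure \<theta> {p \<in> space \<theta>. ennreal (t - s) < X p} \<partial>lborel)"
    using emeasure_bound by (intro nn_integral_mono) (simp add: emeasure_eq_measure split: split_indicator)
  also have "\<dots> \<le> (\<integral>\<^sup>+p. X p \<partial>\<theta>)"
    by (rule nn_integral_emeasure_tail_le) (simp_all add: X_def sigma_finite_measure_axioms)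
  finally show ?thesis
    unfolding X_def .
qed

lemma fluid_solution_le_nn_integral_min:
  assumes data: "fluid_data lam \<theta> \<zeta>0" and sol: "fluid_solution lam \<theta> \<zeta>0 z"
    and "0 \<le> t" and "0 < M" and bound: "\<forall>s\<in>{0..t}. z s \<le> M"
  shows "ennreal (z t) \<le> ennreal (measure \<zeta>0 (space \<zeta>0))
           + ennreal lam * (\<integral>\<^sup>+p. min (fst p * ennreal M) (snd p) \<partial>\<theta>)"
proof -
  have "0 < lam" and \<theta>: "prob_space \<theta>" "sets \<theta> = sets borel" and "finite_measure \<zeta>0"
    using data unfolding fluid_data_def by auto
  define I where "I = (LINT s:{0..t}|lborel. measure \<theta> {p. Sfun z s t < fst p \<and> ennreal (t - s) < snd p})"
  have "z t = measure \<zeta>0 {p. Sfun z 0 t < fst p \<and> ennreal t < snd p} + lam * I"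
    using sol \<open>0 \<le> t\<close> unfolding fluid_solution_def I_def by blast
  moreover have "measure \<zeta>0 {p. Sfun z 0 t < fst p \<and> ennreal t < snd p} \<le> measure \<zeta>0 (space \<zeta>0)"
    using \<open>finite_measure \<zeta>0\<close> by (rule finite_measure.bounded_measure)
  moreover have "0 \<le> I"
    unfolding I_def set_lebesgue_integral_def by (intro integral_nonneg_AE AE_I2) simp
  moreover have "ennreal I \<le> (\<integral>\<^sup>+p. min (fst p * ennreal M) (snd p) \<partial>\<theta>)"
    unfolding I_def using \<open>0 < M\<close> bound fluid_solution_pos[OF sol]
    by (intro fluid_arrival_integral_le[OF \<theta>]) auto
  ultimately show ?thesis
    using \<open>0 < lam\<close>
    by (auto simp: ennreal_mult intro!: add_mono mult_left_mono ennreal_leI)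
qed

lemma fluid_solution_le_affine:
  assumes data: "fluid_data lam \<theta> \<zeta>0" and sol: "fluid_solution lam \<theta> \<zeta>0 z"
    and "0 \<le> K" and "0 \<le> r"
    and tail_eq: "ennreal lam * (\<integral>\<^sup>+p\<in>{p. ennreal K < snd p}. min (fst p) (snd p) \<partial>\<theta>) = ennreal r"
    and "0 \<le> t" and "1 \<le> M" and bound: "\<forall>s\<in>{0..t}. z s \<le> M"
  shows "z t \<le> measure \<zeta>0 (space \<zeta>0) + lam * K + r * M"
proof -
  have "0 < lam" and \<theta>: "prob_space \<theta>" and S: "sets \<theta> = sets borel"
    using data unfolding fluid_data_def by auto
  note [measurable] = fst_measurable_sets_borel[OF S] snd_measurable_sets_borel[OF S]
  note space = space_sets_borel[OF S]
  have "ennreal (z t) \<le> ennreal (measure \<zeta>0 (space \<zeta>0))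
      + ennreal lam * (\<integral>\<^sup>+p. min (fst p * ennreal M) (snd p) \<partial>\<theta>)"
    using \<open>1 \<le> M\<close> by (intro fluid_solution_le_nn_integral_min[OF data sol \<open>0 \<le> t\<close> _ bound]) simp
  also have "\<dots> \<le> ennreal (measure \<zeta>0 (space \<zeta>0))
      + ennreal lam * (ennreal K + ennreal M * (\<integral>\<^sup>+p\<in>{p. ennreal K < snd p}. min (fst p) (snd p) \<partial>\<theta>))"
    using nn_integral_min_mult_le[OF \<theta>, of fst snd "ennreal M" "ennreal K"] \<open>1 \<le> M\<close>
    by (intro add_mono mult_left_mono) (simp_all add: space)
  also have "\<dots> = ennreal (measure \<zeta>0 (space \<zeta>0) + lam * K + r * M)"
    using \<open>0 < lam\<close> \<open>0 \<le> K\<close> \<open>0 \<le> r\<close> \<open>1 \<le> M\<close>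
    by (simp add: tail_eq distrib_left ennreal_mult mult.left_commute mult.commute)
  finally show ?thesis
    using \<open>0 < lam\<close> \<open>0 \<le> K\<close> \<open>0 \<le> r\<close> \<open>1 \<le> M\<close> by (subst (asm) ennreal_le_iff) auto
qed

theorem mainTheorem5:
  fixes lam :: real and \<theta> \<zeta>0 :: "(ennreal \<times> ennreal) measure" and z :: "real \<Rightarrow> real"
  assumes "fluid_data lam \<theta> \<zeta>0"
    and "ennreal lam * (\<integral>\<^sup>+ x. fst x * indicator {p. snd p = \<top>} x \<partial>\<theta>) < 1"
    and "(\<integral>\<^sup>+ x. min (fst x) (snd x) \<partial>\<theta>) < \<top>"
    and "fluid_solution lam \<theta> \<zeta>0 z"
  shows "\<exists>M. \<forall>t\<ge>0. z t \<le> M"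
proof -
  have S: "sets \<theta> = sets borel"
    using assms(1) unfolding fluid_data_def by auto
  note [measurable] = fst_measurable_sets_borel[OF S] snd_measurable_sets_borel[OF S]
  note space = space_sets_borel[OF S]
  define tail where "tail n = (\<integral>\<^sup>+p\<in>{p. of_nat n < snd p}. min (fst p) (snd p) \<partial>\<theta>)" for n :: nat
  have "(\<lambda>n. ennreal lam * tail n) \<longlonglongrightarrow> ennreal lam * (\<integral>\<^sup>+ x. fst x * indicator {p. snd p = \<top>} x \<partial>\<theta>)"
    using tendsto_nn_integral_min_tail[of fst \<theta> snd] assms(3)
    by (intro ennreal_tendsto_cmult) (simp_all add: tail_def space)
  then have "eventually (\<lambda>n. ennreal lam * tail n < 1) sequentially"
    using assms(2) by (rule order_tendstoD)
  then obtain n where "ennreal lam * tail n < 1"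
    by (auto simp: eventually_sequentially)
  moreover define r where "r = enn2real (ennreal lam * tail n)"
  ultimately have tail_eq: "ennreal lam * tail n = ennreal r"
    by (auto simp: ennreal_enn2real_if)
  with \<open>ennreal lam * tail n < 1\<close> have "r < 1"
    by simp
  have "continuous_on {0..} z"
    using assms(4) unfolding fluid_solution_def by blast
  then show ?thesis
    using \<open>r < 1\<close>
  proof (rule bounded_if_le_affine_running_max)
    fix t M assume "0 \<le> t" "1 \<le> M" "\<forall>s\<in>{0..t}. z s \<le> M"
    then show "z t \<le> measure \<zeta>0 (space \<zeta>0) + lam * real n + r * M"
      using tail_eq by (intro fluid_solution_le_affine[OF assms(1,4)])
        (simp_all add: r_def tail_def ennreal_of_nat_eq_real_of_nat)
  qed
qed

end
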